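(* Let $G$ be a graph, $\mathcal{B}$ a set of balls in $G$, $X\subset V(G)$, $\mathcal{H}$ the set of connected components of $G-X$, and $G'$ an induced subgraph of $G$. Suppose $X\subseteq V(G')$ and, for every $H\in\mathcal{H}$, either (1) $V(H)\subseteq V(G')$, or (2) $V(H)\cap V(G')=\emptyset$ and there exist distinct $H',H''$ with $H'\sim_{\mathcal{B}}H$, $H''\sim_{\mathcal{B}}H$ and $V(H')\cup V(H'')\subseteq V(G')$. Then the set $\mathcal{B}'=\{B_r(u)\cap V(G') : B_r(u)\in\mathcal{B},\ u\in V(G')\}$ is a set of balls in $G'$. Moreover, there is a bijection between the balls in $\mathcal{B}'$ and the balls in $\mathcal{B}$ centered in $V(G')$.
   Context: For a graph $G$, $r\ge 0$ and $v\in V(G)$, the ball $B_r(v)$ is the set of vertices at distance at most $r$ from $v$ (its center). Two components $H,H'\in\mathcal{H}$ are twin-blocks with respect to $\mathcal{B}$, written $H\sim_{\mathcal{B}}H'$, if there is an isomorphism $\alpha$ from $H$ to $H'$ such that (i) for each $u\in V(H)$ and $x\in X$, $ux\in E(G)$ iff $\alpha(u)x\in E(G)$, and (ii) for each $u\in V(H)$ and $r\in\mathbb{N}$, $B_r(u)\in\mathcal{B}$ iff $B_r(\alpha(u))\in\mathcal{B}$. *)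

theory Defs
  imports Main
begin

text \<open>A (finite, simple, undirected) graph: vertex set V and a symmetric,
  irreflexive adjacency relation E. An induced subgraph on a vertex set V' is
  given by the same relation E restricted to V'.\<close>
definition graph :: "'a set \<Rightarrow> ('a \<Rightarrow> 'a \<Rightarrow> bool) \<Rightarrow> bool" where
  "graph V E \<longleftrightarrow> finite V \<and> (\<forall>u v. E u v \<longrightarrow> u \<in> V \<and> v \<in> V)
      \<and> (\<forall>u v. E u v \<longrightarrow> E v u) \<and> (\<forall>u. \<not> E u u)"

definition walk :: "('a \<Rightarrow> 'a \<Rightarrow> bool) \<Rightarrow> 'a set \<Rightarrow> 'a list \<Rightarrow> bool" where
  "walk E V xs \<longleftrightarrow> xs \<noteq> [] \<and> set xs \<subseteq> V
      \<and> (\<forall>i. Suc i < length xs \<longrightarrow> E (xs ! i) (xs ! Suc i))"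

text \<open>Ball of radius r around u in the graph (V, E restricted to V):
  vertices at distance at most r from u.\<close>
definition ball :: "('a \<Rightarrow> 'a \<Rightarrow> bool) \<Rightarrow> 'a set \<Rightarrow> nat \<Rightarrow> 'a \<Rightarrow> 'a set" where
  "ball E V r u = {w. \<exists>xs. walk E V xs \<and> hd xs = u \<and> last xs = w \<and> length xs \<le> Suc r}"

definition is_ball :: "('a \<Rightarrow> 'a \<Rightarrow> bool) \<Rightarrow> 'a set \<Rightarrow> 'a set \<Rightarrow> bool" where
  "is_ball E V S \<longleftrightarrow> (\<exists>u\<in>V. \<exists>r. S = ball E V r u)"

definition components :: "('a \<Rightarrow> 'a \<Rightarrow> bool) \<Rightarrow> 'a set \<Rightarrow> 'a set \<Rightarrow> 'a set set" where
  "components E V X = {C. \<exists>v \<in> V - X. C = {w. \<exists>r. w \<in> ball E (V - X) r v}}"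

definition twin_blocks ::
  "('a \<Rightarrow> 'a \<Rightarrow> bool) \<Rightarrow> 'a set \<Rightarrow> 'a set \<Rightarrow> 'a set set \<Rightarrow> 'a set \<Rightarrow> 'a set \<Rightarrow> bool" where
  "twin_blocks E V X \<B> H H' \<longleftrightarrow> (\<exists>\<alpha>. bij_betw \<alpha> H H'
      \<and> (\<forall>u\<in>H. \<forall>w\<in>H. E u w \<longleftrightarrow> E (\<alpha> u) (\<alpha> w))
      \<and> (\<forall>u\<in>H. \<forall>x\<in>X. E u x \<longleftrightarrow> E (\<alpha> u) x)
      \<and> (\<forall>u\<in>H. \<forall>r. ball E V r u \<in> \<B> \<longleftrightarrow> ball E V r (\<alpha> u) \<in> \<B>))"

end

theory Submission
  imports Defs
begin

text \<open>A vertex outside \<open>V'\<close> lies in a component \<open>H\<close> of \<open>G - X\<close> that misses \<open>V'\<close> and has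
  a twin inside \<open>V'\<close>. Since \<open>H\<close> is attached to the rest of \<open>G\<close> only through \<open>X\<close>, whose
  adjacencies the twin isomorphism preserves, replacing the vertices of \<open>H\<close> on a walk by their
  twins yields a walk of the same length with the same ends outside \<open>H\<close>. Repeating this moves
  every walk between vertices of \<open>V'\<close> into \<open>V'\<close>, so a ball of \<open>G\<close> centred in \<open>V'\<close> meets
  \<open>V'\<close> in the ball of \<open>G[V']\<close> with the same centre and radius. For injectivity of
  \<open>B \<mapsto> B \<inter> V'\<close>, a vertex \<open>w \<notin> V'\<close> of one ball is moved to its twin in \<open>V'\<close>, hence into the
  other ball, and then back to \<open>w\<close> inside the other ball; of the two twins of \<open>H\<close> one avoids the
  centre of the other ball, which is what makes the way back possible.\<close>

lemma walk_iff_successively: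
  "walk E W xs \<longleftrightarrow> xs \<noteq> [] \<and> set xs \<subseteq> W \<and> successively E xs"
  by (auto simp: walk_def successively_conv_nth)

lemma walk_mono: "walk E W xs \<Longrightarrow> W \<subseteq> W' \<Longrightarrow> walk E W' xs"
  by (auto simp: walk_iff_successively)

lemma walk_last_in: "walk E W xs \<Longrightarrow> last xs \<in> W"
  by (auto simp: walk_iff_successively)

lemma walk_map:
  assumes "walk E W xs" "f ` W \<subseteq> W'"
    and "\<And>a b. a \<in> W \<Longrightarrow> b \<in> W \<Longrightarrow> E a b \<Longrightarrow> E' (f a) (f b)"
  shows "walk E' W' (map f xs)"
proof -
  have "successively (\<lambda>a b. E' (f a) (f b)) xs"
    using assms(1,3) unfolding walk_iff_successively
    by (elim conjE successively_mono) blast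
  then show ?thesis
    using assms(1,2) by (auto simp: walk_iff_successively successively_map)
qed

lemma ball_subset: "ball E W r u \<subseteq> W"
  unfolding ball_def by (blast dest: walk_last_in)

lemma ball_mono: "W \<subseteq> W' \<Longrightarrow> ball E W r u \<subseteq> ball E W' r u"
  unfolding ball_def by (blast dest: walk_mono)

definition linked :: "('a \<Rightarrow> 'a \<Rightarrow> bool) \<Rightarrow> 'a set \<Rightarrow> 'a \<Rightarrow> 'a \<Rightarrow> bool" where
  "linked E W a b \<longleftrightarrow> (\<exists>xs. walk E W xs \<and> hd xs = a \<and> last xs = b)"

lemma linked_iff_in_some_ball: "linked E W v w \<longleftrightarrow> (\<exists>r. w \<in> ball E W r v)"
proof
  assume "linked E W v w"
  then obtain xs where "walk E W xs" "hd xs = v" "last xs = w"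
    unfolding linked_def by blast
  then show "\<exists>r. w \<in> ball E W r v"
    unfolding ball_def by (intro exI[of _ "length xs"]) auto
qed (auto simp: ball_def linked_def)

lemma linked_edge: "a \<in> W \<Longrightarrow> b \<in> W \<Longrightarrow> E a b \<Longrightarrow> linked E W a b"
  unfolding linked_def by (rule exI[of _ "[a, b]"]) (simp add: walk_iff_successively)

lemma linked_refl: "a \<in> W \<Longrightarrow> linked E W a a"
  unfolding linked_def by (rule exI[of _ "[a]"]) (simp add: walk_iff_successively)

lemma linked_trans:
  assumes "linked E W a b" "linked E W b c"
  shows "linked E W a c"
proof -
  obtain xs ys where xs: "walk E W xs" "hd xs = a" "last xs = b"
    and ys: "walk E W ys" "hd ys = b" "last ys = c"
    using assms unfolding linked_def by blast
  then obtain zs where ys_eq: "ys = b # zs"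
    by (cases ys) (auto simp: walk_iff_successively)
  have "walk E W (xs @ zs)"
    using xs ys ys_eq by (auto simp: walk_iff_successively successively_append_iff successively_Cons)
  moreover have "hd (xs @ zs) = a" "last (xs @ zs) = c"
    using xs ys ys_eq by (auto simp: walk_iff_successively)
  ultimately show ?thesis
    unfolding linked_def by blast
qed

lemma linked_sym:
  assumes "symp E" "linked E W a b"
  shows "linked E W b a"
proof -
  obtain xs where xs: "walk E W xs" "hd xs = a" "last xs = b"
    using assms(2) unfolding linked_def by blast
  have "successively E xs"
    using xs(1) by (simp add: walk_iff_successively)
  then have "successively (\<lambda>x y. E y x) xs"
    by (rule successively_mono) (use assms(1) in \<open>blast dest: sympD\<close>)
  then have "walk E W (rev xs)"
    using xs(1) by (simp add: walk_iff_successively)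
  then show ?thesis
    using xs unfolding linked_def by (metis hd_rev last_rev)
qed

lemma components_eq:
  "components E V X = {{w. linked E (V - X) v w} | v. v \<in> V - X}"
  unfolding components_def linked_iff_in_some_ball by blast

lemma component_subset: "H \<in> components E V X \<Longrightarrow> H \<subseteq> V - X"
  unfolding components_eq linked_def by (blast dest: walk_last_in)

lemma in_some_component: "v \<in> V - X \<Longrightarrow> \<exists>H \<in> components E V X. v \<in> H"
  unfolding components_eq by (blast intro: linked_refl)

lemma components_disjoint:
  assumes "symp E" "H1 \<in> components E V X" "H2 \<in> components E V X" "x \<in> H1" "x \<in> H2"
  shows "H1 = H2"
proof -
  obtain v1 v2 where H: "H1 = {w. linked E (V - X) v1 w}" "H2 = {w. linked E (V - X) v2 w}"
    using assms(2,3) unfolding components_eq by blast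
  then have "linked E (V - X) v1 v2" "linked E (V - X) v2 v1"
    using assms(1,4,5) by (auto intro: linked_trans linked_sym)
  then show ?thesis
    unfolding H by (blast intro: linked_trans)
qed

lemma edge_leaving_component_in_X:
  assumes "H \<in> components E V X" "a \<in> H" "b \<in> V" "E a b" "b \<notin> H"
  shows "b \<in> X"
proof (rule ccontr)
  assume "b \<notin> X"
  obtain v where H: "H = {w. linked E (V - X) v w}"
    using assms(1) unfolding components_eq by blast
  have "linked E (V - X) a b"
    using assms component_subset \<open>b \<notin> X\<close> by (blast intro: linked_edge)
  then show False
    using assms(2,5) H by (blast intro: linked_trans)
qed

definition twin_map :: "('a \<Rightarrow> 'a \<Rightarrow> bool) \<Rightarrow> 'a set \<Rightarrow> 'a set \<Rightarrow> 'a set \<Rightarrow> ('a \<Rightarrow> 'a) \<Rightarrow> bool" where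
  "twin_map E X H H' \<alpha> \<longleftrightarrow> bij_betw \<alpha> H H'
      \<and> (\<forall>u\<in>H. \<forall>w\<in>H. E u w \<longleftrightarrow> E (\<alpha> u) (\<alpha> w))
      \<and> (\<forall>u\<in>H. \<forall>x\<in>X. E u x \<longleftrightarrow> E (\<alpha> u) x)"

lemma twin_blocks_imp_twin_map: "twin_blocks E V X \<B> H H' \<Longrightarrow> \<exists>\<alpha>. twin_map E X H H' \<alpha>"
  unfolding twin_blocks_def twin_map_def by blast

lemma twin_map_into: "twin_map E X H H' \<alpha> \<Longrightarrow> u \<in> H \<Longrightarrow> \<alpha> u \<in> H'"
  unfolding twin_map_def by (blast intro: bij_betw_apply)

lemma twin_map_inv_into:
  assumes "twin_map E X H H' \<alpha>"
  shows "twin_map E X H' H (inv_into H \<alpha>)"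
proof -
  have bij: "bij_betw \<alpha> H H'"
    and edges: "\<forall>u\<in>H. \<forall>w\<in>H. E u w \<longleftrightarrow> E (\<alpha> u) (\<alpha> w)"
    and edges_X: "\<forall>u\<in>H. \<forall>x\<in>X. E u x \<longleftrightarrow> E (\<alpha> u) x"
    using assms unfolding twin_map_def by blast+
  have inv_in: "inv_into H \<alpha> u \<in> H" and inv_inv: "\<alpha> (inv_into H \<alpha> u) = u" if "u \<in> H'" for u
    using bij that by (auto simp: bij_betw_def inv_into_into f_inv_into_f)
  show ?thesis
    unfolding twin_map_def
    using bij_betw_inv_into[OF bij] edges edges_X inv_in inv_inv by metis
qed

lemma walk_map_override_twin_map:
  assumes "symp E" "H \<in> components E V X" "H' \<subseteq> V" "twin_map E X H H' \<alpha>" "walk E V xs"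
  shows "walk E V (map (override_on id \<alpha> H) xs)"
proof (rule walk_map[OF assms(5)])
  let ?f = "override_on id \<alpha> H"
  have "\<alpha> ` H \<subseteq> V"
    using assms(3,4) by (auto simp: twin_map_def bij_betw_def)
  then show "?f ` V \<subseteq> V"
    by (auto simp: override_on_def)
  have edges: "E u w \<Longrightarrow> E (\<alpha> u) (\<alpha> w)" if "u \<in> H" "w \<in> H" for u w
    using assms(4) that unfolding twin_map_def by blast
  have edges_X: "E u x \<Longrightarrow> E (\<alpha> u) x" if "u \<in> H" "x \<in> X" for u x
    using assms(4) that unfolding twin_map_def by blast
  have leave: "b \<in> X" if "a \<in> H" "b \<in> V" "E a b" "b \<notin> H" for a b
    using edge_leaving_component_in_X[OF assms(2) that] .
  fix a b
  assume ab: "a \<in> V" "b \<in> V" "E a b"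
  then have ba: "E b a"
    using assms(1) by (blast dest: sympD)
  consider "a \<in> H" "b \<in> H" | "a \<in> H" "b \<notin> H" | "a \<notin> H" "b \<in> H" | "a \<notin> H" "b \<notin> H"
    by blast
  then show "E (?f a) (?f b)"
  proof cases
    case 1
    then show ?thesis using ab edges by simp
  next
    case 2
    then show ?thesis using ab edges_X leave by simp
  next
    case 3
    then have "E (\<alpha> b) a"
      using ab ba edges_X leave by blast
    then show ?thesis
      using 3 assms(1) by (simp add: sympD)
  next
    case 4
    then show ?thesis using ab by simp
  qed
qed

lemma override_on_twin_map_in_ball:
  assumes "symp E" "H \<in> components E V X" "H' \<subseteq> V" "twin_map E X H H' \<alpha>"
    and "u \<notin> H" "w \<in> ball E V r u"
  shows "override_on id \<alpha> H w \<in> ball E V r u"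
proof -
  obtain xs where xs: "walk E V xs" "hd xs = u" "last xs = w" "length xs \<le> Suc r"
    using assms(6) unfolding ball_def by blast
  then have "xs \<noteq> []"
    by (simp add: walk_iff_successively)
  then show ?thesis
    unfolding ball_def using xs assms(5) walk_map_override_twin_map[OF assms(1-4) xs(1)]
    by (intro CollectI exI[of _ "map (override_on id \<alpha> H) xs"]) (simp add: hd_map last_map)
qed

locale twin_reduction =
  fixes V :: "'a set" and E :: "'a \<Rightarrow> 'a \<Rightarrow> bool" and X :: "'a set"
    and \<B> :: "'a set set" and V' :: "'a set"
  assumes graph: "graph V E"
    and V'_subset: "V' \<subseteq> V"
    and X_subset_V': "X \<subseteq> V'"
    and components_kept_or_twinned: "\<forall>H\<in>components E V X.
           H \<subseteq> V'
         \<or> (H \<inter> V' = {} \<and> (\<exists>H1\<in>components E V X. \<exists>H2\<in>components E V X.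
               H1 \<noteq> H2 \<and> twin_blocks E V X \<B> H1 H \<and> twin_blocks E V X \<B> H2 H
               \<and> H1 \<union> H2 \<subseteq> V'))"
begin

lemma symp_E: "symp E"
  using graph unfolding graph_def by (blast intro: sympI)

lemma twin_inside_V'_avoiding:
  assumes "H \<in> components E V X" "\<not> H \<subseteq> V'"
  obtains H' \<alpha> where "H' \<in> components E V X" "H' \<subseteq> V'" "u \<notin> H'" "H \<inter> V' = {}"
    "twin_map E X H' H \<alpha>"
proof -
  have "H \<inter> V' = {} \<and> (\<exists>H1\<in>components E V X. \<exists>H2\<in>components E V X.
          H1 \<noteq> H2 \<and> twin_blocks E V X \<B> H1 H \<and> twin_blocks E V X \<B> H2 H \<and> H1 \<union> H2 \<subseteq> V')"
    using components_kept_or_twinned assms by metis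
  then obtain H1 H2 where H12: "H1 \<in> components E V X" "H2 \<in> components E V X" "H1 \<noteq> H2"
    "twin_blocks E V X \<B> H1 H" "twin_blocks E V X \<B> H2 H" "H1 \<union> H2 \<subseteq> V'" "H \<inter> V' = {}"
    by blast
  have "u \<notin> H1 \<or> u \<notin> H2"
    using components_disjoint[OF symp_E H12(1,2)] H12(3) by blast
  then obtain H' where H': "H' \<in> {H1, H2}" "u \<notin> H'"
    by blast
  then obtain \<alpha> where "twin_map E X H' H \<alpha>"
    using H12(4,5) twin_blocks_imp_twin_map by blast
  then show thesis
    using that[of H' \<alpha>] H' H12 by blast
qed

lemma walk_reroute:
  "walk E V xs \<Longrightarrow> hd xs \<in> V' \<Longrightarrow> last xs \<in> V' \<Longrightarrow>
    \<exists>ys. walk E V' ys \<and> hd ys = hd xs \<and> last ys = last xs \<and> length ys = length xs"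
proof (induction "card (set xs - V')" arbitrary: xs rule: less_induct)
  case less
  show ?case
  proof (cases "set xs \<subseteq> V'")
    case True
    then show ?thesis
      using less.prems(1) by (auto simp: walk_iff_successively)
  next
    case False
    then obtain v where v: "v \<in> set xs" "v \<notin> V'"
      by blast
    then have "v \<in> V - X"
      using less.prems(1) X_subset_V' unfolding walk_iff_successively by blast
    then obtain H where H: "H \<in> components E V X" "v \<in> H"
      using in_some_component by metis
    have "\<not> H \<subseteq> V'"
      using H(2) v(2) by blast
    then obtain H' \<alpha> where H': "H' \<in> components E V X" "H' \<subseteq> V'" "v \<notin> H'" "H \<inter> V' = {}"
      and \<alpha>: "twin_map E X H' H \<alpha>"
      by (rule twin_inside_V'_avoiding[OF H(1)])
    let ?\<beta> = "override_on id (inv_into H' \<alpha>) H"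
    have \<beta>_into: "?\<beta> x \<in> H'" if "x \<in> H" for x
      using twin_map_into[OF twin_map_inv_into[OF \<alpha>]] that by simp
    have walk: "walk E V (map ?\<beta> xs)"
      using walk_map_override_twin_map[OF symp_E H(1) _ twin_map_inv_into[OF \<alpha>] less.prems(1)]
        H'(2) V'_subset by blast
    have ends: "hd (map ?\<beta> xs) = hd xs" "last (map ?\<beta> xs) = last xs"
    proof -
      have "xs \<noteq> []"
        using less.prems(1) by (simp add: walk_iff_successively)
      moreover have "hd xs \<notin> H" "last xs \<notin> H"
        using less.prems(2,3) H'(4) by blast+
      ultimately show "hd (map ?\<beta> xs) = hd xs" "last (map ?\<beta> xs) = last xs"
        by (simp_all add: hd_map last_map)
    qed
    have "set (map ?\<beta> xs) - V' \<subseteq> (set xs - V') - {v}"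
    proof
      fix y
      assume "y \<in> set (map ?\<beta> xs) - V'"
      then obtain x where "x \<in> set xs" "y = ?\<beta> x" "y \<notin> V'"
        by auto
      moreover have "x \<notin> H"
        using \<beta>_into H'(2) calculation by blast
      ultimately show "y \<in> (set xs - V') - {v}"
        using H(2) by auto
    qed
    then have "card (set (map ?\<beta> xs) - V') \<le> card ((set xs - V') - {v})"
      by (intro card_mono) auto
    also have "\<dots> < card (set xs - V')"
      using v by (intro card_Diff1_less) auto
    finally have "card (set (map ?\<beta> xs) - V') < card (set xs - V')" .
    from less.hyps[OF this walk] ends less.prems(2,3) show ?thesis
      by simp
  qed
qed

lemma ball_inter_V'_eq:
  assumes "u \<in> V'"
  shows "ball E V r u \<inter> V' = ball E V' r u"
proof
  show "ball E V r u \<inter> V' \<subseteq> ball E V' r u"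
  proof
    fix w
    assume "w \<in> ball E V r u \<inter> V'"
    then obtain xs where xs: "walk E V xs" "hd xs = u" "last xs = w" "length xs \<le> Suc r" "w \<in> V'"
      unfolding ball_def by blast
    then obtain ys where "walk E V' ys" "hd ys = u" "last ys = w" "length ys = length xs"
      using walk_reroute[OF xs(1)] assms by auto
    then show "w \<in> ball E V' r u"
      unfolding ball_def using xs(4) by auto
  qed
  show "ball E V' r u \<subseteq> ball E V r u \<inter> V'"
    by (intro Int_greatest ball_mono[OF V'_subset] ball_subset)
qed

lemma ball_subset_if_inter_V'_subset:
  assumes "u1 \<in> V'" "u2 \<in> V'" "ball E V r1 u1 \<inter> V' \<subseteq> ball E V r2 u2 \<inter> V'"
  shows "ball E V r1 u1 \<subseteq> ball E V r2 u2"
proof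
  fix w
  assume w: "w \<in> ball E V r1 u1"
  show "w \<in> ball E V r2 u2"
  proof (cases "w \<in> V'")
    case True
    then show ?thesis
      using w assms(3) by blast
  next
    case False
    then have "w \<in> V - X"
      using w ball_subset[of E V r1 u1] X_subset_V' by blast
    then obtain H where H: "H \<in> components E V X" "w \<in> H"
      using in_some_component by metis
    have "\<not> H \<subseteq> V'"
      using H(2) False by blast
    then obtain H' \<alpha> where H': "H' \<in> components E V X" "H' \<subseteq> V'" "u2 \<notin> H'" "H \<inter> V' = {}"
      and \<alpha>: "twin_map E X H' H \<alpha>"
      by (rule twin_inside_V'_avoiding[OF H(1)])
    let ?\<beta> = "inv_into H' \<alpha>"
    have "H' \<subseteq> V"
      using H'(2) V'_subset by blast
    moreover have "u1 \<notin> H"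
      using assms(1) H'(4) by blast
    ultimately have "override_on id ?\<beta> H w \<in> ball E V r1 u1"
      by (rule override_on_twin_map_in_ball[OF symp_E H(1) _ twin_map_inv_into[OF \<alpha>] _ w])
    moreover have "?\<beta> w \<in> H'"
      using twin_map_into[OF twin_map_inv_into[OF \<alpha>] H(2)] .
    ultimately have "?\<beta> w \<in> ball E V r2 u2"
      using assms(3) H'(2) H(2) by auto
    moreover have "H \<subseteq> V"
      using component_subset[OF H(1)] by blast
    ultimately have "override_on id \<alpha> H' (?\<beta> w) \<in> ball E V r2 u2"
      by (intro override_on_twin_map_in_ball[OF symp_E H'(1) _ \<alpha> H'(3)])
    moreover have "\<alpha> (?\<beta> w) = w"
      using \<alpha> H(2) by (auto simp: twin_map_def bij_betw_def f_inv_into_f)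
    ultimately show ?thesis
      using \<open>?\<beta> w \<in> H'\<close> by simp
  qed
qed

lemma inj_on_inter_V': "inj_on (\<lambda>B. B \<inter> V') {B. \<exists>u\<in>V'. \<exists>r. B = ball E V r u}"
proof (rule inj_onI)
  fix B1 B2
  assume "B1 \<in> {B. \<exists>u\<in>V'. \<exists>r. B = ball E V r u}" "B2 \<in> {B. \<exists>u\<in>V'. \<exists>r. B = ball E V r u}"
    and eq: "B1 \<inter> V' = B2 \<inter> V'"
  then obtain u1 r1 u2 r2 where B: "u1 \<in> V'" "B1 = ball E V r1 u1" "u2 \<in> V'" "B2 = ball E V r2 u2"
    by blast
  show "B1 = B2"
    using ball_subset_if_inter_V'_subset[of u1 u2 r1 r2] ball_subset_if_inter_V'_subset[of u2 u1 r2 r1]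
      B eq by auto
qed

end

theorem lemma22:
  fixes V V' X :: "'a set" and E :: "'a \<Rightarrow> 'a \<Rightarrow> bool" and \<B> :: "'a set set"
  assumes "graph V E"
    and "\<forall>B\<in>\<B>. is_ball E V B"
    and "X \<subseteq> V"
    and "V' \<subseteq> V"
    and "X \<subseteq> V'"
    and "\<forall>H\<in>components E V X.
           H \<subseteq> V'
         \<or> (H \<inter> V' = {} \<and> (\<exists>H1\<in>components E V X. \<exists>H2\<in>components E V X.
               H1 \<noteq> H2 \<and> twin_blocks E V X \<B> H1 H \<and> twin_blocks E V X \<B> H2 H
               \<and> H1 \<union> H2 \<subseteq> V'))"
  shows "(\<forall>B'\<in>{ball E V r u \<inter> V' | r u. ball E V r u \<in> \<B> \<and> u \<in> V'}. is_ball E V' B')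
       \<and> (\<exists>f. bij_betw f {B\<in>\<B>. \<exists>u\<in>V'. \<exists>r. B = ball E V r u}
                        {ball E V r u \<inter> V' | r u. ball E V r u \<in> \<B> \<and> u \<in> V'})"
proof -
  interpret twin_reduction V E X \<B> V'
    using assms(1,4-6) by unfold_locales
  let ?\<B>' = "{ball E V r u \<inter> V' | r u. ball E V r u \<in> \<B> \<and> u \<in> V'}"
  let ?centered_in_V' = "{B\<in>\<B>. \<exists>u\<in>V'. \<exists>r. B = ball E V r u}"
  have "is_ball E V' B'" if B': "B' \<in> ?\<B>'" for B'
  proof -
    obtain r u where "B' = ball E V r u \<inter> V'" "u \<in> V'"
      using B' by blast
    then show ?thesis
      unfolding is_ball_def using ball_inter_V'_eq by blast
  qed
  moreover have "bij_betw (\<lambda>B. B \<inter> V') ?centered_in_V' ?\<B>'"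
  proof (rule bij_betw_imageI)
    show "inj_on (\<lambda>B. B \<inter> V') ?centered_in_V'"
      by (rule inj_on_subset[OF inj_on_inter_V']) blast
    show "(\<lambda>B. B \<inter> V') ` ?centered_in_V' = ?\<B>'"
      by force
  qed
  ultimately show ?thesis
    by blast
qed

end
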